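(* Let $\mathbf{z}_1,\ldots,\mathbf{z}_n\in\mathbb{R}^d$ satisfy $\|\mathbf{z}_i\|_2\le1$ for all $i\in[n]$ and $\mathbf{0}\in\mathrm{conv}(\mathbf{z}_1,\ldots,\mathbf{z}_n)$. Then $\big\|\frac1n\sum_{i=1}^n\mathbf{z}_i\big\|_2\le1-\frac1n$.
   Context: $\mathrm{conv}$ denotes the convex hull. *)

theory Defs
  imports "HOL-Analysis.Analysis"
begin

end

theory Submission
  imports Defs
begin

(* Write 0 = \<Sum> u i z i as a convex combination.  Then the mean equals
   \<Sum> ((1 - u i) / n) z i, whose coefficients are nonnegative and add up to
   (n - 1) / n, so the triangle inequality and norm (z i) \<le> 1 give the bound. *)

(* Unlike convex_hull_finite, the weights live on the index set, so repeated points are fine. *)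
lemma convex_hull_image_finite_obtain:
  assumes "finite I" and "x \<in> convex hull (f ` I)"
  obtains u where "\<forall>i\<in>I. 0 \<le> u i" and "sum u I = 1" and "(\<Sum>i\<in>I. u i *\<^sub>R f i) = x"
proof -
  define C where "C = {\<Sum>i\<in>I. u i *\<^sub>R f i | u. (\<forall>i\<in>I. 0 \<le> u i) \<and> sum u I = 1}"
  have "f i \<in> C" if "i \<in> I" for i
  proof -
    let ?u = "\<lambda>j. if j = i then 1 else 0 :: real"
    have "(\<Sum>j\<in>I. ?u j *\<^sub>R f j) = f i" "sum ?u I = 1"
      using assms(1) that by (simp_all add: if_distrib[of "\<lambda>c. c *\<^sub>R _"] cong: if_cong)
    then show ?thesis unfolding C_def by (intro CollectI exI[of _ ?u]) simp
  qed
  moreover have "convex C"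
  proof (rule convexI)
    fix x y and a b :: real
    assume "x \<in> C" "y \<in> C" "0 \<le> a" "0 \<le> b" "a + b = 1"
    then obtain u v where
      u: "\<forall>i\<in>I. 0 \<le> u i" "sum u I = 1" "x = (\<Sum>i\<in>I. u i *\<^sub>R f i)" and
      v: "\<forall>i\<in>I. 0 \<le> v i" "sum v I = 1" "y = (\<Sum>i\<in>I. v i *\<^sub>R f i)"
      unfolding C_def by blast
    let ?w = "\<lambda>i. a * u i + b * v i"
    have "a *\<^sub>R x + b *\<^sub>R y = (\<Sum>i\<in>I. ?w i *\<^sub>R f i)"
      by (simp add: u(3) v(3) scaleR_sum_right sum.distrib scaleR_add_left)
    moreover have "\<forall>i\<in>I. 0 \<le> ?w i" "sum ?w I = 1"
      using u v \<open>0 \<le> a\<close> \<open>0 \<le> b\<close> \<open>a + b = 1\<close>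
      by (simp_all add: sum.distrib flip: sum_distrib_left)
    ultimately show "a *\<^sub>R x + b *\<^sub>R y \<in> C"
      unfolding C_def by (intro CollectI exI[of _ ?w]) simp
  qed
  ultimately have "convex hull (f ` I) \<subseteq> C"
    by (intro hull_minimal) auto
  with assms(2) that show thesis unfolding C_def by blast
qed

lemma norm_mean_le_if_zero_in_convex_hull:
  fixes z :: "'i \<Rightarrow> 'a::real_normed_vector"
  assumes "finite I" and norm_le: "\<forall>i\<in>I. norm (z i) \<le> 1"
    and "0 \<in> convex hull (z ` I)"
  shows "norm ((1 / real (card I)) *\<^sub>R (\<Sum>i\<in>I. z i)) \<le> 1 - 1 / real (card I)"
proof -
  obtain u where u_nonneg: "\<forall>i\<in>I. 0 \<le> u i" and u_sum: "sum u I = 1"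
    and u_zero: "(\<Sum>i\<in>I. u i *\<^sub>R z i) = 0"
    using convex_hull_image_finite_obtain[OF assms(1,3)] by blast
  define n where "n = real (card I)"
  have "I \<noteq> {}" using u_sum by auto
  then have "n > 0" using assms(1) by (simp add: n_def card_gt_0_iff)
  define w where "w i = (1 - u i) / n" for i
  have u_le_1: "u i \<le> 1" if "i \<in> I" for i
    using member_le_sum[of i I u] assms(1) that u_nonneg u_sum by simp
  have w_nonneg: "0 \<le> w i" if "i \<in> I" for i
    using u_le_1[OF that] \<open>n > 0\<close> by (simp add: w_def)
  have "(1 / n) *\<^sub>R (\<Sum>i\<in>I. z i) = (1 / n) *\<^sub>R (\<Sum>i\<in>I. z i - u i *\<^sub>R z i)"
    by (simp add: sum_subtractf u_zero)
  also have "\<dots> = (\<Sum>i\<in>I. w i *\<^sub>R z i)"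
    unfolding scaleR_sum_right w_def
    by (intro sum.cong refl) (simp add: scaleR_diff_left scaleR_diff_right diff_divide_distrib)
  finally have mean_eq: "(1 / n) *\<^sub>R (\<Sum>i\<in>I. z i) = (\<Sum>i\<in>I. w i *\<^sub>R z i)" .
  have "norm (\<Sum>i\<in>I. w i *\<^sub>R z i) \<le> (\<Sum>i\<in>I. w i * norm (z i))"
    using norm_sum[of "\<lambda>i. w i *\<^sub>R z i" I] w_nonneg by simp
  also have "\<dots> \<le> sum w I"
    using w_nonneg norm_le by (intro sum_mono) (simp add: mult_left_le)
  also have "\<dots> = (card I - sum u I) / n"
    by (simp add: w_def sum_subtractf flip: sum_divide_distrib)
  also have "\<dots> = 1 - 1 / n"
    using u_sum \<open>n > 0\<close> by (simp add: n_def field_simps)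
  finally show ?thesis using mean_eq by (simp add: n_def)
qed

theorem lemma3p10:
  fixes z :: "nat \<Rightarrow> real ^ 'd" and n :: nat
  assumes "\<And>i. i \<in> {1..n} \<Longrightarrow> norm (z i) \<le> 1"
    and "0 \<in> convex hull (z ` {1..n})"
  shows "norm ((1 / real n) *\<^sub>R (\<Sum>i=1..n. z i)) \<le> 1 - 1 / real n"
  using norm_mean_le_if_zero_in_convex_hull[of "{1..n}" z] assms by simp

end
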